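(* Let $F$ satisfy (G1)–(G3), let $\mu$ be an ergodic stationary probability measure of $\Pi(F)$, and let $k,k'\in\{1,\dots,N\}$. Then for every $\varepsilon>0$ there exist admissible compositions $G_A,G_B:I_k\to I_{k'}$ with $G_A(I_{\mu,k})\subset U_\varepsilon(A_{\mu,k'})$ and $G_B(I_{\mu,k})\subset U_\varepsilon(B_{\mu,k'})$.
   Context: Setting: $N\ge1$; $\{0,1\}$-matrix $A=(a_{ij})$ with some power having all entries positive; stochastic matrix $\Pi=(\pi_{ij})$ with $\pi_{ij}>0$ iff $a_{ij}=1$. $I=[0,1]$; $f_1,\dots,f_N:I\to I$ strictly increasing $C^1$ diffeomorphisms onto their images with $f_k(I)\subset(0,1)$. $\mathcal I=\{1,\dots,N\}\times I$, $I_k=\{k\}\times I$. $(k,m)$ admissible iff $\pi_{km}>0$. $\Pi(F)$: Markov process jumping from $(i,x)$ to $(j,f_i(x))$ with probability $\pi_{ij}$. $\mu$ stationary iff $\mu_j=\sum_i\pi_{ij}(f_i)_*\mu_i$ ($\mu_k=\mu|_{I_k}$); ergodic = extreme point. $A_{\mu,k}=\min\operatorname{supp}\mu_k$, $B_{\mu,k}=\max\operatorname{supp}\mu_k$, $I_{\mu,k}=[A_{\mu,k},B_{\mu,k}]$. $U_\varepsilon$ denotes the $\varepsilon$-neighborhood. Admissible composition $f_{w_1\dots w_n}=f_{w_n}\circ\dots\circ f_{w_1}:I_{w_1}\to I_{w_{n+1}}$ with each $(w_i,w_{i+1})$, $i\le n$, admissible; simple transition: $w_1,\dots,w_{n+1}$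 distinct; simple return: $w_1,\dots,w_n$ distinct, $w_{n+1}=w_1$. (G1) every fixed point $q$ of a simple return $g$ has $g'(q)\ne1$; (G2) no simple transition maps an attracting (resp. repelling) fixed point of a simple return to a repelling (resp. attracting) fixed point of a simple return; (G3) no $a_1,\dots,a_N\in I$ with $f_i(a_i)=a_j$ for all admissible $(i,j)$. *)

theory Defs
  imports "HOL-Analysis.Analysis"
begin

text \<open>Vertices are 1..N. Matrices are functions nat => nat => _ (only entries in 1..N matter).\<close>

fun matpow :: "nat \<Rightarrow> (nat \<Rightarrow> nat \<Rightarrow> real) \<Rightarrow> nat \<Rightarrow> nat \<Rightarrow> nat \<Rightarrow> real" where
  "matpow N A 0 i j = (if i = j then 1 else 0)"
| "matpow N A (Suc n) i j = (\<Sum>l\<in>{1..N}. matpow N A n i l * A l j)"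

definition zero_one_matrix :: "nat \<Rightarrow> (nat \<Rightarrow> nat \<Rightarrow> real) \<Rightarrow> bool" where
  "zero_one_matrix N A \<longleftrightarrow> (\<forall>i\<in>{1..N}. \<forall>j\<in>{1..N}. A i j = 0 \<or> A i j = 1)"

definition primitive_matrix :: "nat \<Rightarrow> (nat \<Rightarrow> nat \<Rightarrow> real) \<Rightarrow> bool" where
  "primitive_matrix N A \<longleftrightarrow> (\<exists>n\<ge>1. \<forall>i\<in>{1..N}. \<forall>j\<in>{1..N}. matpow N A n i j > 0)"

definition stochastic_matrix :: "nat \<Rightarrow> (nat \<Rightarrow> nat \<Rightarrow> real) \<Rightarrow> bool" where
  "stochastic_matrix N P \<longleftrightarrow>
     (\<forall>i\<in>{1..N}. (\<forall>j\<in>{1..N}. P i j \<ge> 0) \<and> (\<Sum>j\<in>{1..N}. P i j) = 1)"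

definition good_map :: "(real \<Rightarrow> real) \<Rightarrow> bool" where
  "good_map g \<longleftrightarrow> strict_mono_on {0..1} g \<and> g ` {0..1} \<subseteq> {0<..<1} \<and>
     (\<exists>g'. (\<forall>x\<in>{0..1}. (g has_real_derivative g' x) (at x within {0..1}))
          \<and> continuous_on {0..1} g' \<and> (\<forall>x\<in>{0..1}. g' x \<noteq> 0))"

text \<open>Composition along a word ws = [w_1,...,w_(n+1)]: f_(w_n) o ... o f_(w_1).\<close>
definition word_comp :: "(nat \<Rightarrow> real \<Rightarrow> real) \<Rightarrow> nat list \<Rightarrow> real \<Rightarrow> real" where
  "word_comp f ws = foldl (\<lambda>g i. f i \<circ> g) id (butlast ws)"

definition adm_word :: "nat \<Rightarrow> (nat \<Rightarrow> nat \<Rightarrow> real) \<Rightarrow> nat list \<Rightarrow> nat \<Rightarrow> nat \<Rightarrow> bool" where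
  "adm_word N P ws i j \<longleftrightarrow> length ws \<ge> 2 \<and> set ws \<subseteq> {1..N} \<and> hd ws = i \<and> last ws = j \<and>
     (\<forall>m. Suc m < length ws \<longrightarrow> P (ws ! m) (ws ! Suc m) > 0)"

definition adm_comp :: "nat \<Rightarrow> (nat \<Rightarrow> nat \<Rightarrow> real) \<Rightarrow> (nat \<Rightarrow> real \<Rightarrow> real) \<Rightarrow> nat \<Rightarrow> nat \<Rightarrow> (real \<Rightarrow> real) \<Rightarrow> bool" where
  "adm_comp N P f i j G \<longleftrightarrow> (\<exists>ws. adm_word N P ws i j \<and> G = word_comp f ws)"

definition simple_transition :: "nat \<Rightarrow> (nat \<Rightarrow> nat \<Rightarrow> real) \<Rightarrow> (nat \<Rightarrow> real \<Rightarrow> real) \<Rightarrow> nat \<Rightarrow> nat \<Rightarrow> (real \<Rightarrow> real) \<Rightarrow> bool" where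
  "simple_transition N P f i j G \<longleftrightarrow>
     (\<exists>ws. adm_word N P ws i j \<and> distinct ws \<and> G = word_comp f ws)"

definition simple_return :: "nat \<Rightarrow> (nat \<Rightarrow> nat \<Rightarrow> real) \<Rightarrow> (nat \<Rightarrow> real \<Rightarrow> real) \<Rightarrow> nat \<Rightarrow> (real \<Rightarrow> real) \<Rightarrow> bool" where
  "simple_return N P f i G \<longleftrightarrow>
     (\<exists>ws. adm_word N P ws i i \<and> distinct (butlast ws) \<and> G = word_comp f ws)"

definition G1 :: "nat \<Rightarrow> (nat \<Rightarrow> nat \<Rightarrow> real) \<Rightarrow> (nat \<Rightarrow> real \<Rightarrow> real) \<Rightarrow> bool" where
  "G1 N P f \<longleftrightarrow> (\<forall>i g q d. simple_return N P f i g \<and> q \<in> {0..1} \<and> g q = q \<and>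
      (g has_real_derivative d) (at q within {0..1}) \<longrightarrow> d \<noteq> 1)"

text \<open>attracting: derivative < 1; repelling: derivative > 1 (derivatives are positive)\<close>
definition attracting_fp :: "nat \<Rightarrow> (nat \<Rightarrow> nat \<Rightarrow> real) \<Rightarrow> (nat \<Rightarrow> real \<Rightarrow> real) \<Rightarrow> nat \<Rightarrow> real \<Rightarrow> bool" where
  "attracting_fp N P f i q \<longleftrightarrow> (\<exists>g d. simple_return N P f i g \<and> q \<in> {0..1} \<and> g q = q \<and>
      (g has_real_derivative d) (at q within {0..1}) \<and> \<bar>d\<bar> < 1)"

definition repelling_fp :: "nat \<Rightarrow> (nat \<Rightarrow> nat \<Rightarrow> real) \<Rightarrow> (nat \<Rightarrow> real \<Rightarrow> real) \<Rightarrow> nat \<Rightarrow> real \<Rightarrow> bool" where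
  "repelling_fp N P f i q \<longleftrightarrow> (\<exists>g d. simple_return N P f i g \<and> q \<in> {0..1} \<and> g q = q \<and>
      (g has_real_derivative d) (at q within {0..1}) \<and> \<bar>d\<bar> > 1)"

definition G2 :: "nat \<Rightarrow> (nat \<Rightarrow> nat \<Rightarrow> real) \<Rightarrow> (nat \<Rightarrow> real \<Rightarrow> real) \<Rightarrow> bool" where
  "G2 N P f \<longleftrightarrow> (\<forall>i j h q. simple_transition N P f i j h \<longrightarrow>
      \<not> (attracting_fp N P f i q \<and> repelling_fp N P f j (h q)) \<and>
      \<not> (repelling_fp N P f i q \<and> attracting_fp N P f j (h q)))"

definition G3 :: "nat \<Rightarrow> (nat \<Rightarrow> nat \<Rightarrow> real) \<Rightarrow> (nat \<Rightarrow> real \<Rightarrow> real) \<Rightarrow> bool" where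
  "G3 N P f \<longleftrightarrow> \<not> (\<exists>a. (\<forall>i\<in>{1..N}. a i \<in> {0..1}) \<and>
      (\<forall>i\<in>{1..N}. \<forall>j\<in>{1..N}. P i j > 0 \<longrightarrow> f i (a i) = a j))"

text \<open>A measure on {1..N} x I is represented by the family of its restrictions mu_k to I_k,
  each a Borel measure on the reals concentrated on [0,1].\<close>
definition prob_family :: "nat \<Rightarrow> (nat \<Rightarrow> real measure) \<Rightarrow> bool" where
  "prob_family N \<mu> \<longleftrightarrow> (\<forall>k\<in>{1..N}. sets (\<mu> k) = sets borel \<and> emeasure (\<mu> k) (- {0..1}) = 0)
     \<and> (\<Sum>k\<in>{1..N}. emeasure (\<mu> k) UNIV) = 1"

definition stationary :: "nat \<Rightarrow> (nat \<Rightarrow> nat \<Rightarrow> real) \<Rightarrow> (nat \<Rightarrow> real \<Rightarrow> real) \<Rightarrow> (nat \<Rightarrow> real measure) \<Rightarrow> bool" where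
  "stationary N P f \<mu> \<longleftrightarrow> prob_family N \<mu> \<and>
     (\<forall>j\<in>{1..N}. \<forall>A\<in>sets borel.
        emeasure (\<mu> j) A = (\<Sum>i\<in>{1..N}. ennreal (P i j) * emeasure (\<mu> i) (f i -` A \<inter> {0..1})))"

text \<open>ergodic = extreme point of the convex set of stationary probability measures\<close>
definition ergodic :: "nat \<Rightarrow> (nat \<Rightarrow> nat \<Rightarrow> real) \<Rightarrow> (nat \<Rightarrow> real \<Rightarrow> real) \<Rightarrow> (nat \<Rightarrow> real measure) \<Rightarrow> bool" where
  "ergodic N P f \<mu> \<longleftrightarrow> stationary N P f \<mu> \<and>
     (\<forall>\<nu>1 \<nu>2 (t::real). stationary N P f \<nu>1 \<and> stationary N P f \<nu>2 \<and> 0 < t \<and> t < 1 \<and>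
        (\<forall>k\<in>{1..N}. \<forall>A\<in>sets borel. emeasure (\<mu> k) A =
            ennreal t * emeasure (\<nu>1 k) A + ennreal (1 - t) * emeasure (\<nu>2 k) A)
      \<longrightarrow> (\<forall>k\<in>{1..N}. \<forall>A\<in>sets borel. emeasure (\<nu>1 k) A = emeasure (\<mu> k) A))"

definition msupp :: "real measure \<Rightarrow> real set" where
  "msupp M = {x. \<forall>e>0. emeasure M (ball x e) \<noteq> 0}"

definition A_mu :: "(nat \<Rightarrow> real measure) \<Rightarrow> nat \<Rightarrow> real" where
  "A_mu \<mu> k = Inf (msupp (\<mu> k))"

definition B_mu :: "(nat \<Rightarrow> real measure) \<Rightarrow> nat \<Rightarrow> real" where
  "B_mu \<mu> k = Sup (msupp (\<mu> k))"

end

theory Submission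
  imports Defs
begin

text \<open>
  Fix \<open>k\<close>, \<open>k'\<close> and consider the orbit of the top point \<open>B\<^sub>k\<close> of the support of
  \<open>\<mu>\<^sub>k\<close> under all admissible compositions \<open>I\<^sub>k \<rightarrow> I\<^sub>j\<close>.  By continuity and monotonicity the
  infima \<open>c\<^sub>j\<close> of these orbits satisfy \<open>c\<^sub>j \<le> f\<^sub>i(c\<^sub>i)\<close>, so the rays \<open>[c\<^sub>j, \<infinity>)\<close> form a forward
  invariant family.  By (G3) the \<open>c\<^sub>j\<close> are not all equal to the tops \<open>B\<^sub>j\<close>, so this family
  carries positive mass; ergodicity then forces it to carry all the mass, whence
  \<open>c\<^sub>k\<^sub>' \<le> A\<^sub>k\<^sub>'\<close>.  A composition nearly realising \<open>c\<^sub>k\<^sub>'\<close> maps \<open>[A\<^sub>k, B\<^sub>k]\<close> monotonically into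
  \<open>[A\<^sub>k\<^sub>', A\<^sub>k\<^sub>' + \<epsilon>)\<close>.  The upper endpoint follows by the reflection \<open>x \<mapsto> 1 - x\<close>.
\<close>

section \<open>Admissible compositions\<close>

lemma word_comp_snoc:
  assumes "ws \<noteq> []"
  shows "word_comp f (ws @ [j]) = f (last ws) \<circ> word_comp f ws"
proof -
  have "foldl (\<lambda>g i. f i \<circ> g) id ws = foldl (\<lambda>g i. f i \<circ> g) id (butlast ws @ [last ws])"
    using assms by simp
  also have "\<dots> = f (last ws) \<circ> foldl (\<lambda>g i. f i \<circ> g) id (butlast ws)"
    by (simp only: foldl_append foldl_Cons foldl_Nil)
  finally show ?thesis unfolding word_comp_def by simp
qed

lemma adm_word_snoc:
  assumes "adm_word N P ws i l" "P l j > 0" "j \<in> {1..N}"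
  shows "adm_word N P (ws @ [j]) i j"
  unfolding adm_word_def
proof (intro conjI allI impI)
  have ne: "ws \<noteq> []" using assms(1) by (auto simp: adm_word_def)
  fix m assume m: "Suc m < length (ws @ [j])"
  show "P ((ws @ [j]) ! m) ((ws @ [j]) ! Suc m) > 0"
  proof (cases "Suc m < length ws")
    case True then show ?thesis using assms(1) by (simp add: adm_word_def nth_append)
  next
    case False
    then have "m = length ws - 1" using m by simp
    then show ?thesis using ne assms by (simp add: adm_word_def nth_append last_conv_nth)
  qed
qed (use assms in \<open>auto simp: adm_word_def hd_append\<close>)

lemma adm_comp_endpoints:
  assumes "adm_comp N P f i j G"
  shows "i \<in> {1..N}" "j \<in> {1..N}"
  using assms unfolding adm_comp_def adm_word_def
  by (metis hd_in_set list.size(3) not_numeral_le_zero subsetD,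
      metis last_in_set list.size(3) not_numeral_le_zero subsetD)

lemma adm_comp_single:
  assumes "i \<in> {1..N}" "j \<in> {1..N}" "P i j > 0"
  shows "adm_comp N P f i j (f i)"
proof -
  have "adm_word N P [i, j] i j" using assms by (auto simp: adm_word_def less_Suc_eq)
  moreover have "word_comp f [i, j] = f i" by (simp add: word_comp_def)
  ultimately show ?thesis unfolding adm_comp_def by metis
qed

lemma adm_comp_snoc:
  assumes "adm_comp N P f i l G" "P l j > 0" "j \<in> {1..N}"
  shows "adm_comp N P f i j (f l \<circ> G)"
proof -
  obtain ws where ws: "adm_word N P ws i l" "G = word_comp f ws"
    using assms(1) unfolding adm_comp_def by blast
  have "ws \<noteq> []" "last ws = l" using ws(1) by (auto simp: adm_word_def)
  then have "word_comp f (ws @ [j]) = f l \<circ> G" using ws(2) by (simp add: word_comp_snoc)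
  then show ?thesis using adm_word_snoc[OF ws(1) assms(2,3)] unfolding adm_comp_def by metis
qed


lemma adm_word_butlast:
  assumes "adm_word N P (ws @ [j]) i j'" "length ws \<ge> 2"
  shows "adm_word N P ws i (last ws)"
  unfolding adm_word_def
proof (intro conjI allI impI)
  fix m assume m: "Suc m < length ws"
  then have "Suc m < length (ws @ [j])" by simp
  then have "P ((ws @ [j]) ! m) ((ws @ [j]) ! Suc m) > 0"
    using assms(1) unfolding adm_word_def by blast
  then show "P (ws ! m) (ws ! Suc m) > 0" using m by (simp add: nth_append)
qed (use assms in \<open>auto simp: adm_word_def hd_append\<close>)

lemma adm_word_last_step:
  assumes "adm_word N P (ws @ [j]) i j'"
  shows "ws \<noteq> []" "j' = j" "j \<in> {1..N}" "P (last ws) j > 0"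
proof -
  show ne: "ws \<noteq> []" using assms by (auto simp: adm_word_def)
  show "j' = j" "j \<in> {1..N}" using assms by (auto simp: adm_word_def)
  have "Suc (length ws - 1) < length (ws @ [j])" using ne by simp
  then have "P ((ws @ [j]) ! (length ws - 1)) ((ws @ [j]) ! Suc (length ws - 1)) > 0"
    using assms unfolding adm_word_def by blast
  then show "P (last ws) j > 0" using ne by (simp add: nth_append last_conv_nth)
qed

lemma adm_comp_induct[consumes 1, case_names single snoc]:
  assumes "adm_comp N P f i j G"
    and single: "\<And>j. i \<in> {1..N} \<Longrightarrow> j \<in> {1..N} \<Longrightarrow> P i j > 0 \<Longrightarrow> Q j (f i)"
    and snoc: "\<And>l j G. adm_comp N P f i l G \<Longrightarrow> Q l G \<Longrightarrow> l \<in> {1..N} \<Longrightarrow> j \<in> {1..N} \<Longrightarrow>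
                 P l j > 0 \<Longrightarrow> Q j (f l \<circ> G)"
  shows "Q j G"
proof -
  obtain ws where ws: "adm_word N P ws i j" "G = word_comp f ws"
    using assms(1) unfolding adm_comp_def by blast
  have "Q j (word_comp f ws)" using ws(1)
  proof (induction ws arbitrary: j rule: rev_induct)
    case Nil then show ?case by (simp add: adm_word_def)
  next
    case (snoc x ws)
    note last_step = adm_word_last_step[OF snoc.prems]
    show ?case
    proof (cases "length ws \<ge> 2")
      case True
      have w: "adm_word N P ws i (last ws)" by (rule adm_word_butlast[OF snoc.prems True])
      have "last ws \<in> {1..N}" using w last_in_set[OF last_step(1)] by (auto simp: adm_word_def)
      moreover have "adm_comp N P f i (last ws) (word_comp f ws)" using w unfolding adm_comp_def by blast
      ultimately have "Q x (f (last ws) \<circ> word_comp f ws)"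
        using snoc.IH[OF w] last_step by (intro assms(3)) auto
      then show ?thesis using word_comp_snoc[OF last_step(1)] last_step(2) by metis
    next
      case False
      then have "length ws = 1" using last_step(1) by (cases ws) (simp_all add: Suc_le_eq)
      then obtain v where "ws = [v]" by (metis One_nat_def length_0_conv length_Suc_conv)
      then have "ws = [i]" using snoc.prems by (simp add: adm_word_def)
      then show ?thesis using snoc.prems last_step single
        by (auto simp: adm_word_def word_comp_def)
    qed
  qed
  then show ?thesis using ws(2) by simp
qed

text \<open>A positive entry of a power of the transition graph's adjacency matrix yields an
  admissible composition; hence primitivity makes every vertex reachable from every other.\<close>
lemma matpow_pos_adm_comp:
  assumes A01: "zero_one_matrix N A"
    and PA: "\<forall>i\<in>{1..N}. \<forall>j\<in>{1..N}. P i j > 0 \<longleftrightarrow> A i j = 1"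
    and i: "i \<in> {1..N}" and j: "j \<in> {1..N}" and pos: "matpow N A (Suc n) i j > 0"
  shows "\<exists>G. adm_comp N P f i j G"
  using j pos
proof (induction n arbitrary: j)
  case 0
  have "matpow N A (Suc 0) i j = (\<Sum>l\<in>{1..N}. if i = l then A l j else 0)"
    unfolding matpow.simps by (intro sum.cong) auto
  also have "\<dots> = A i j" using i by simp
  finally have "matpow N A (Suc 0) i j = A i j" .
  then have "A i j = 1" using 0 A01 i unfolding zero_one_matrix_def by force
  then show ?case using adm_comp_single PA i 0 by blast
next
  case (Suc n)
  have "0 < (\<Sum>l\<in>{1..N}. matpow N A (Suc n) i l * A l j)" using Suc.prems(2) by simp
  then obtain l where l: "l \<in> {1..N}" "matpow N A (Suc n) i l * A l j > 0"
    by (metis (no_types, lifting) not_less sum_nonpos)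
  have "A l j = 1" using l A01 Suc.prems(1) unfolding zero_one_matrix_def by force
  then have "matpow N A (Suc n) i l > 0" "P l j > 0" using l PA Suc.prems(1) by auto
  then show ?case using Suc.IH[OF l(1)] adm_comp_snoc Suc.prems(1) by blast
qed

text \<open>Reflection \<open>x \<mapsto> 1 - x\<close> of the unit interval, acting on maps by conjugation.
  It exchanges lower and upper endpoints and commutes with composition.\<close>
definition flip :: "(real \<Rightarrow> real) \<Rightarrow> real \<Rightarrow> real" where
  "flip h x = 1 - h (1 - x)"

lemma flip_flip [simp]: "flip (flip h) = h"
  by (simp add: flip_def fun_eq_iff)

lemma word_comp_flip: "word_comp (\<lambda>i. flip (g i)) ws = flip (word_comp g ws)"
proof -
  have "foldl (\<lambda>G i. flip (g i) \<circ> G) (flip H) vs = flip (foldl (\<lambda>G i. g i \<circ> G) H vs)" for H vs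
  proof (induction vs arbitrary: H)
    case (Cons v vs)
    have "flip (g v) \<circ> flip H = flip (g v \<circ> H)" by (simp add: flip_def fun_eq_iff)
    then show ?case using Cons.IH[of "g v \<circ> H"] by (simp only: foldl_Cons)
  qed simp
  moreover have "flip id = id" by (simp add: flip_def fun_eq_iff)
  ultimately show ?thesis unfolding word_comp_def by metis
qed

lemma adm_comp_flip_iff:
  "adm_comp N P (\<lambda>i. flip (g i)) i j H \<longleftrightarrow> adm_comp N P g i j (flip H)"
  unfolding adm_comp_def word_comp_flip by (metis flip_flip)

section \<open>The order-theoretic argument\<close>

text \<open>The supports of a stationary measure are the
  intended instance.\<close>
locale ordered_system =
  fixes N :: nat and P :: "nat \<Rightarrow> nat \<Rightarrow> real" and g :: "nat \<Rightarrow> real \<Rightarrow> real"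
    and S :: "nat \<Rightarrow> real set" and a b :: "nat \<Rightarrow> real"
  assumes cont: "\<And>i. i \<in> {1..N} \<Longrightarrow> continuous_on {0..1} (g i)"
    and mono: "\<And>i. i \<in> {1..N} \<Longrightarrow> mono_on {0..1} (g i)"
    and maps_unit: "\<And>i. i \<in> {1..N} \<Longrightarrow> g i ` {0..1} \<subseteq> {0..1}"
    and S_unit: "\<And>j. j \<in> {1..N} \<Longrightarrow> S j \<subseteq> {0..1}"
    and S_step: "\<And>i j. i \<in> {1..N} \<Longrightarrow> j \<in> {1..N} \<Longrightarrow> P i j > 0 \<Longrightarrow> g i ` S i \<subseteq> S j"
    and min_in: "\<And>j. j \<in> {1..N} \<Longrightarrow> a j \<in> S j"
    and min_le: "\<And>j x. j \<in> {1..N} \<Longrightarrow> x \<in> S j \<Longrightarrow> a j \<le> x"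
    and max_in: "\<And>j. j \<in> {1..N} \<Longrightarrow> b j \<in> S j"
    and max_ge: "\<And>j x. j \<in> {1..N} \<Longrightarrow> x \<in> S j \<Longrightarrow> x \<le> b j"
    and connected: "\<And>i j. i \<in> {1..N} \<Longrightarrow> j \<in> {1..N} \<Longrightarrow> \<exists>G. adm_comp N P g i j G"
begin

lemma comp_props:
  assumes "adm_comp N P g i j G"
  shows "G ` {0..1} \<subseteq> {0..1}" "mono_on {0..1} G" "G ` S i \<subseteq> S j"
proof -
  have "G ` {0..1} \<subseteq> {0..1} \<and> mono_on {0..1} G \<and> G ` S i \<subseteq> S j"
    using assms
  proof (induction rule: adm_comp_induct)
    case (single j)
    then show ?case using maps_unit mono S_step by blast
  next
    case (snoc l j G)
    have "(g l \<circ> G) ` {0..1} \<subseteq> {0..1}" using snoc.IH maps_unit[OF snoc.hyps(2)]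
      by (auto simp: image_comp[symmetric])
    moreover have "mono_on {0..1} (g l \<circ> G)"
    proof (rule mono_onI)
      fix r s :: real assume "r \<in> {0..1}" "s \<in> {0..1}" "r \<le> s"
      then have "G r \<le> G s" "G r \<in> {0..1}" "G s \<in> {0..1}"
        using snoc.IH mono_onD by blast+
      then show "(g l \<circ> G) r \<le> (g l \<circ> G) s" using mono_onD[OF mono[OF snoc.hyps(2)]] by simp
    qed
    moreover have "(g l \<circ> G) ` S i \<subseteq> S j"
      using image_mono[of "G ` S i" "S l" "g l"] snoc.IH S_step[OF snoc.hyps(2-4)]
      by (simp add: image_comp)
    ultimately show ?case by blast
  qed
  then show "G ` {0..1} \<subseteq> {0..1}" "mono_on {0..1} G" "G ` S i \<subseteq> S j" by blast+
qed

definition orbit :: "nat \<Rightarrow> nat \<Rightarrow> real set" where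
  "orbit k j = {G (b k) | G. adm_comp N P g k j G}"

definition orbit_inf :: "nat \<Rightarrow> nat \<Rightarrow> real" where
  "orbit_inf k j = Inf (orbit k j)"

lemma orbit_subset:
  assumes "k \<in> {1..N}" "j \<in> {1..N}"
  shows "orbit k j \<noteq> {}" "orbit k j \<subseteq> S j"
  using connected[OF assms] comp_props(3) max_in[OF assms(1)] unfolding orbit_def by blast+

lemma orbit_inf_le:
  assumes "y \<in> orbit k j"
  shows "orbit_inf k j \<le> y"
proof -
  obtain G where "adm_comp N P g k j G" using assms unfolding orbit_def by blast
  then have "orbit k j \<subseteq> {0..1}"
    using orbit_subset(2) S_unit adm_comp_endpoints by blast
  then have "bdd_below (orbit k j)" by (meson atLeastAtMost_iff bdd_below.I subsetD)
  then show ?thesis unfolding orbit_inf_def using assms by (rule cInf_lower[rotated])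
qed

lemma orbit_inf_bounds:
  assumes "k \<in> {1..N}" "j \<in> {1..N}"
  shows "orbit_inf k j \<in> {0..1}" "orbit_inf k j \<le> b j"
proof -
  obtain y where y: "y \<in> orbit k j" using orbit_subset(1)[OF assms] by blast
  have "y \<in> S j" using y orbit_subset(2)[OF assms] by blast
  then have "orbit_inf k j \<le> y" "y \<le> b j" "y \<le> 1"
    using orbit_inf_le[OF y] max_ge[OF assms(2)] S_unit[OF assms(2)] by auto
  moreover have "0 \<le> orbit_inf k j" unfolding orbit_inf_def
    using orbit_subset[OF assms] S_unit[OF assms(2)] by (intro cInf_greatest) auto
  ultimately show "orbit_inf k j \<in> {0..1}" "orbit_inf k j \<le> b j" by auto
qed

lemma orbit_inf_approx:
  assumes "k \<in> {1..N}" "j \<in> {1..N}" "e > 0"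
  obtains G where "adm_comp N P g k j G" "G (b k) < orbit_inf k j + e"
proof -
  have "Inf (orbit k j) < orbit_inf k j + e" using assms(3) unfolding orbit_inf_def by simp
  then obtain y where "y \<in> orbit k j" "y < orbit_inf k j + e"
    using cInf_lessD[OF orbit_subset(1)[OF assms(1,2)]] by blast
  then show thesis using that unfolding orbit_def by blast
qed

text \<open>By continuity, the orbit infima are pushed up along every admissible step:
  \<open>c\<^sub>j \<le> g\<^sub>i(c\<^sub>i)\<close>.\<close>
lemma orbit_inf_subinvariant:
  assumes k: "k \<in> {1..N}" and i: "i \<in> {1..N}" and j: "j \<in> {1..N}" and Pij: "P i j > 0"
  shows "orbit_inf k j \<le> g i (orbit_inf k i)"
proof (rule field_le_epsilon)
  fix e :: real assume "e > 0"
  define c where "c = orbit_inf k i"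
  have c: "c \<in> {0..1}" unfolding c_def by (rule orbit_inf_bounds(1)[OF k i])
  obtain d where d: "d > 0" "\<And>y. y \<in> {0..1} \<Longrightarrow> dist y c < d \<Longrightarrow> dist (g i y) (g i c) < e"
    using cont[OF i] c \<open>e > 0\<close> unfolding continuous_on_iff by metis
  obtain G where G: "adm_comp N P g k i G" "G (b k) < c + d"
    using orbit_inf_approx[OF k i d(1)] unfolding c_def by blast
  have "G (b k) \<in> orbit k i" using G(1) unfolding orbit_def by blast
  then have y: "c \<le> G (b k)" "G (b k) \<in> {0..1}"
    using orbit_inf_le orbit_subset(2)[OF k i] S_unit[OF i] unfolding c_def by auto
  then have close: "g i (G (b k)) < g i c + e"
    using d(2)[of "G (b k)"] G(2) by (auto simp: dist_real_def)
  have "(g i \<circ> G) (b k) \<in> orbit k j" using adm_comp_snoc[OF G(1) Pij j] unfolding orbit_def by blast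
  then have "orbit_inf k j \<le> g i (G (b k))" using orbit_inf_le by simp
  then show "orbit_inf k j \<le> g i (orbit_inf k i) + e" using close unfolding c_def by linarith
qed

text \<open>Under (G3) the orbit infima cannot all sit at the tops \<open>b\<^sub>j\<close>: otherwise the tops would form a
  common fixed family of the admissible maps.\<close>
lemma orbit_inf_below_max:
  assumes "G3 N P g" and k: "k \<in> {1..N}"
  shows "\<exists>k0\<in>{1..N}. orbit_inf k k0 < b k0"
proof (rule ccontr)
  assume "\<not> ?thesis"
  then have top: "\<And>j. j \<in> {1..N} \<Longrightarrow> orbit_inf k j = b j"
    using orbit_inf_bounds(2)[OF k] by force
  have "g i (b i) = b j" if ij: "i \<in> {1..N}" "j \<in> {1..N}" "P i j > 0" for i j
  proof -
    have "g i (b i) \<le> b j" using S_step[OF ij] max_in[OF ij(1)] max_ge[OF ij(2)] by blast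
    moreover have "b j \<le> g i (b i)" using orbit_inf_subinvariant[OF k ij] top ij by simp
    ultimately show ?thesis by linarith
  qed
  moreover have "b i \<in> {0..1}" if "i \<in> {1..N}" for i using max_in S_unit that by blast
  ultimately show False using assms(1) unfolding G3_def by blast
qed

text \<open>The property that the stationary measure supplies (via ergodicity): a family of thresholds
  pushed up along all admissible steps, and lying strictly below the top of one set, lies below
  the bottom of every set.\<close>
definition lower_threshold_property :: bool where
  "lower_threshold_property \<longleftrightarrow> (\<forall>c. (\<forall>j\<in>{1..N}. c j \<in> {0..1}) \<and>
      (\<forall>i\<in>{1..N}. \<forall>j\<in>{1..N}. P i j > 0 \<longrightarrow> c j \<le> g i (c i)) \<and> (\<exists>k0\<in>{1..N}. c k0 < b k0)
      \<longrightarrow> (\<forall>j\<in>{1..N}. c j \<le> a j))"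

definition upper_threshold_property :: bool where
  "upper_threshold_property \<longleftrightarrow> (\<forall>d. (\<forall>j\<in>{1..N}. d j \<in> {0..1}) \<and>
      (\<forall>i\<in>{1..N}. \<forall>j\<in>{1..N}. P i j > 0 \<longrightarrow> g i (d i) \<le> d j) \<and> (\<exists>k0\<in>{1..N}. a k0 < d k0)
      \<longrightarrow> (\<forall>j\<in>{1..N}. b j \<le> d j))"

text \<open>The orbit infima form a threshold family
  as above, so they lie below the bottoms; a composition nearly realising the infimum works,
  since it maps \<open>a\<^sub>k\<close> into \<open>S\<^sub>k\<^sub>'\<close>, hence above \<open>a\<^sub>k\<^sub>'\<close>, and is monotone.\<close>
lemma lower_end_reachable:
  assumes "G3 N P g" "lower_threshold_property"
    and k: "k \<in> {1..N}" and k': "k' \<in> {1..N}" and "\<epsilon> > 0"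
  shows "\<exists>G. adm_comp N P g k k' G \<and> G ` {a k..b k} \<subseteq> ball (a k') \<epsilon>"
proof -
  have "orbit_inf k k' \<le> a k'"
    using assms(2)[unfolded lower_threshold_property_def, THEN spec, of "orbit_inf k"]
      orbit_inf_bounds(1)[OF k] orbit_inf_subinvariant[OF k] orbit_inf_below_max[OF assms(1) k] k'
    by blast
  moreover obtain G where G: "adm_comp N P g k k' G" "G (b k) < orbit_inf k k' + \<epsilon>"
    using orbit_inf_approx[OF k k' \<open>\<epsilon> > 0\<close>] .
  ultimately have top: "G (b k) < a k' + \<epsilon>" by linarith
  have bottom: "a k' \<le> G (a k)" using comp_props(3)[OF G(1)] min_in[OF k] min_le[OF k'] by blast
  have ends: "a k \<in> {0..1}" "b k \<in> {0..1}" using min_in[OF k] max_in[OF k] S_unit[OF k] by auto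
  have "G x \<in> ball (a k') \<epsilon>" if "x \<in> {a k..b k}" for x
  proof -
    have "x \<in> {0..1}" using that ends by auto
    then have "G (a k) \<le> G x" "G x \<le> G (b k)"
      using that ends mono_onD[OF comp_props(2)[OF G(1)]] by auto
    then show ?thesis using top bottom \<open>\<epsilon> > 0\<close> by (simp add: dist_real_def)
  qed
  then show ?thesis using G(1) by blast
qed

lemma flipped:
  "ordered_system N P (\<lambda>i. flip (g i)) (\<lambda>j. (\<lambda>x. 1 - x) ` S j) (\<lambda>j. 1 - b j) (\<lambda>j. 1 - a j)"
proof
  fix i assume i: "i \<in> {1..N}"
  show "continuous_on {0..1} (flip (g i))" unfolding flip_def
    by (intro continuous_intros continuous_on_compose2[OF cont[OF i]]) auto
  show "mono_on {0..1} (flip (g i))" unfolding flip_def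
    by (intro mono_onI) (auto intro: mono_onD[OF mono[OF i]])
  show "flip (g i) ` {0..1} \<subseteq> {0..1}"
  proof (rule image_subsetI)
    fix x :: real assume "x \<in> {0..1}"
    then have "g i (1 - x) \<in> g i ` {0..1}" by (intro imageI) auto
    then have "g i (1 - x) \<in> {0..1}" using maps_unit[OF i] by blast
    then show "flip (g i) x \<in> {0..1}" by (simp add: flip_def)
  qed
next
  fix j assume j: "j \<in> {1..N}"
  show "(\<lambda>x. 1 - x) ` S j \<subseteq> {0..1}" using S_unit[OF j] by auto
  show "1 - b j \<in> (\<lambda>x. 1 - x) ` S j" "1 - a j \<in> (\<lambda>x. 1 - x) ` S j"
    using max_in[OF j] min_in[OF j] by auto
  show "1 - b j \<le> x" "x \<le> 1 - a j" if "x \<in> (\<lambda>x. 1 - x) ` S j" for x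
    using that max_ge[OF j] min_le[OF j] by auto
next
  fix i j assume "i \<in> {1..N}" "j \<in> {1..N}" "P i j > 0"
  then show "flip (g i) ` (\<lambda>x. 1 - x) ` S i \<subseteq> (\<lambda>x. 1 - x) ` S j"
    using S_step unfolding flip_def by fastforce
next
  fix i j assume "i \<in> {1..N}" "j \<in> {1..N}"
  then show "\<exists>G. adm_comp N P (\<lambda>i. flip (g i)) i j G"
    using connected adm_comp_flip_iff by (metis flip_flip)
qed

lemma G3_flip:
  assumes "G3 N P g"
  shows "G3 N P (\<lambda>i. flip (g i))"
  unfolding G3_def
proof
  assume "\<exists>c. (\<forall>i\<in>{1..N}. c i \<in> {0..1}) \<and>
    (\<forall>i\<in>{1..N}. \<forall>j\<in>{1..N}. P i j > 0 \<longrightarrow> flip (g i) (c i) = c j)"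
  then obtain c where c: "\<forall>i\<in>{1..N}. c i \<in> {0..1}"
    "\<forall>i\<in>{1..N}. \<forall>j\<in>{1..N}. P i j > 0 \<longrightarrow> flip (g i) (c i) = c j" by blast
  have "g i (1 - c i) = 1 - c j" if "i \<in> {1..N}" "j \<in> {1..N}" "P i j > 0" for i j
  proof -
    have "flip (g i) (c i) = c j" using c(2) that by blast
    then show ?thesis by (simp add: flip_def)
  qed
  moreover have "1 - c i \<in> {0..1}" if "i \<in> {1..N}" for i using c(1) that by auto
  ultimately have "\<exists>c'. (\<forall>i\<in>{1..N}. c' i \<in> {0..1}) \<and>
      (\<forall>i\<in>{1..N}. \<forall>j\<in>{1..N}. P i j > 0 \<longrightarrow> g i (c' i) = c' j)"
    by (intro exI[of _ "\<lambda>i. 1 - c i"]) blast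
  then show False using assms unfolding G3_def by blast
qed

text \<open>Mirror image of \<open>lower_end_reachable\<close>, obtained by reflecting the system.\<close>
lemma upper_end_reachable:
  assumes "G3 N P g" "upper_threshold_property"
    and k: "k \<in> {1..N}" and k': "k' \<in> {1..N}" and "\<epsilon> > 0"
  shows "\<exists>G. adm_comp N P g k k' G \<and> G ` {a k..b k} \<subseteq> ball (b k') \<epsilon>"
proof -
  interpret F: ordered_system N P "\<lambda>i. flip (g i)" "\<lambda>j. (\<lambda>x. 1 - x) ` S j" "\<lambda>j. 1 - b j" "\<lambda>j. 1 - a j"
    by (rule flipped)
  have "F.lower_threshold_property"
    unfolding F.lower_threshold_property_def
  proof (intro allI impI)
    fix c assume c: "(\<forall>j\<in>{1..N}. c j \<in> {0..1}) \<and>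
      (\<forall>i\<in>{1..N}. \<forall>j\<in>{1..N}. P i j > 0 \<longrightarrow> c j \<le> flip (g i) (c i)) \<and> (\<exists>k0\<in>{1..N}. c k0 < 1 - a k0)"
    have "g i (1 - c i) \<le> 1 - c j" if "i \<in> {1..N}" "j \<in> {1..N}" "P i j > 0" for i j
    proof -
      have "c j \<le> flip (g i) (c i)" using c that by blast
      then show ?thesis by (simp add: flip_def)
    qed
    moreover have "1 - c j \<in> {0..1}" if "j \<in> {1..N}" for j using c that by auto
    moreover have "\<exists>k0\<in>{1..N}. a k0 < 1 - c k0" using c by force
    ultimately have "\<forall>j\<in>{1..N}. b j \<le> 1 - c j"
      using assms(2)[unfolded upper_threshold_property_def, THEN spec, of "\<lambda>j. 1 - c j"] by blast
    then show "\<forall>j\<in>{1..N}. c j \<le> 1 - b j" by auto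
  qed
  then obtain H where H: "adm_comp N P (\<lambda>i. flip (g i)) k k' H"
    "H ` {1 - b k..1 - a k} \<subseteq> ball (1 - b k') \<epsilon>"
    using F.lower_end_reachable[OF G3_flip[OF assms(1)] _ k k' \<open>\<epsilon> > 0\<close>] by blast
  have "flip H x \<in> ball (b k') \<epsilon>" if "x \<in> {a k..b k}" for x
  proof -
    have "1 - x \<in> {1 - b k..1 - a k}" using that by auto
    then have "H (1 - x) \<in> ball (1 - b k') \<epsilon>" using H(2) by blast
    then show ?thesis by (simp add: flip_def dist_real_def abs_minus_commute)
  qed
  then show ?thesis using H(1) adm_comp_flip_iff by blast
qed

end

section \<open>Supports of an ergodic stationary measure\<close>

lemma good_map_props:
  assumes "good_map h"
  shows "continuous_on {0..1} h" "mono_on {0..1} h" "h ` {0..1} \<subseteq> {0..1}"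
proof -
  obtain h' where "\<And>x. x \<in> {0..1} \<Longrightarrow> (h has_real_derivative h' x) (at x within {0..1})"
    using assms unfolding good_map_def by blast
  then show "continuous_on {0..1} h" by (rule DERIV_continuous_on)
  show "mono_on {0..1} h" using assms unfolding good_map_def by (simp add: strict_mono_on_imp_mono_on)
  show "h ` {0..1} \<subseteq> {0..1}" using assms unfolding good_map_def by auto
qed

locale stationary_system =
  fixes N :: nat and P :: "nat \<Rightarrow> nat \<Rightarrow> real" and f :: "nat \<Rightarrow> real \<Rightarrow> real"
    and \<mu> :: "nat \<Rightarrow> real measure"
  assumes stoch: "stochastic_matrix N P"
    and good: "\<forall>i\<in>{1..N}. good_map (f i)"
    and erg: "ergodic N P f \<mu>"
    and connected: "\<And>i j. i \<in> {1..N} \<Longrightarrow> j \<in> {1..N} \<Longrightarrow> \<exists>G. adm_comp N P f i j G"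
begin

abbreviation m :: "nat \<Rightarrow> real set \<Rightarrow> real" where
  "m k A \<equiv> measure (\<mu> k) A"

abbreviation S :: "nat \<Rightarrow> real set" where
  "S k \<equiv> msupp (\<mu> k)"

lemma P_nonneg: "i \<in> {1..N} \<Longrightarrow> j \<in> {1..N} \<Longrightarrow> P i j \<ge> 0"
  using stoch unfolding stochastic_matrix_def by blast

lemma P_row_sum: "i \<in> {1..N} \<Longrightarrow> (\<Sum>j\<in>{1..N}. P i j) = 1"
  using stoch unfolding stochastic_matrix_def by blast

lemma stat: "stationary N P f \<mu>"
  using erg unfolding ergodic_def by blast

lemma sets_mu: "k \<in> {1..N} \<Longrightarrow> sets (\<mu> k) = sets borel"
  using stat unfolding stationary_def prob_family_def by blast

lemma outside_null: "k \<in> {1..N} \<Longrightarrow> emeasure (\<mu> k) (- {0..1}) = 0"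
  using stat unfolding stationary_def prob_family_def by blast

lemma emeasure_total: "(\<Sum>k\<in>{1..N}. emeasure (\<mu> k) UNIV) = 1"
  using stat unfolding stationary_def prob_family_def by blast

lemma finite_mu: "k \<in> {1..N} \<Longrightarrow> finite_measure (\<mu> k)"
proof (rule finite_measureI)
  assume k: "k \<in> {1..N}"
  have "emeasure (\<mu> k) UNIV \<le> (\<Sum>k\<in>{1..N}. emeasure (\<mu> k) UNIV)"
    by (rule member_le_sum) (use k in simp_all)
  then have "emeasure (\<mu> k) UNIV \<noteq> \<infinity>" using emeasure_total by (auto simp: top_unique)
  moreover have "space (\<mu> k) = UNIV" using sets_eq_imp_space_eq[OF sets_mu[OF k]] by simp
  ultimately show "emeasure (\<mu> k) (space (\<mu> k)) \<noteq> \<infinity>" by simp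
qed

lemma emeasure_real: "k \<in> {1..N} \<Longrightarrow> emeasure (\<mu> k) A = ennreal (m k A)"
  by (rule finite_measure.emeasure_eq_measure[OF finite_mu])

lemma measure_total: "(\<Sum>k\<in>{1..N}. m k UNIV) = 1"
proof -
  have "ennreal (\<Sum>k\<in>{1..N}. m k UNIV) = (\<Sum>k\<in>{1..N}. emeasure (\<mu> k) UNIV)"
    by (simp add: emeasure_real)
  then show ?thesis using emeasure_total by simp
qed

lemma f_cont: "i \<in> {1..N} \<Longrightarrow> continuous_on {0..1} (f i)"
  and f_mono: "i \<in> {1..N} \<Longrightarrow> mono_on {0..1} (f i)"
  and f_unit: "i \<in> {1..N} \<Longrightarrow> f i ` {0..1} \<subseteq> {0..1}"
  using good good_map_props by blast+

lemma preimage_borel: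
  assumes i: "i \<in> {1..N}" and A: "A \<in> sets borel"
  shows "f i -` A \<inter> {0..1} \<in> sets borel"
proof -
  define h where "h = (\<lambda>x::real. f i (max 0 (min 1 x)))"
  have "continuous_on UNIV h" unfolding h_def
    by (rule continuous_on_compose2[OF f_cont[OF i]]) (auto intro!: continuous_intros)
  then have "h \<in> borel_measurable borel" by (rule borel_measurable_continuous_onI)
  then have "h -` A \<inter> space borel \<in> sets borel" using A by (rule measurable_sets)
  then have "h -` A \<inter> {0..1} \<in> sets borel" by auto
  moreover have "h -` A \<inter> {0..1} = f i -` A \<inter> {0..1}" unfolding h_def by auto
  ultimately show ?thesis by simp
qed

lemma stationary_real:
  assumes j: "j \<in> {1..N}" and A: "A \<in> sets borel"
  shows "m j A = (\<Sum>i\<in>{1..N}. P i j * m i (f i -` A \<inter> {0..1}))"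
proof -
  have "ennreal (m j A) = (\<Sum>i\<in>{1..N}. ennreal (P i j) * emeasure (\<mu> i) (f i -` A \<inter> {0..1}))"
    using stat j A unfolding stationary_def by (simp add: emeasure_real[OF j, symmetric])
  also have "\<dots> = (\<Sum>i\<in>{1..N}. ennreal (P i j * m i (f i -` A \<inter> {0..1})))"
  proof (intro sum.cong refl)
    fix i assume i: "i \<in> {1..N}"
    show "ennreal (P i j) * emeasure (\<mu> i) (f i -` A \<inter> {0..1}) = ennreal (P i j * m i (f i -` A \<inter> {0..1}))"
      by (simp add: emeasure_real[OF i] ennreal_mult P_nonneg[OF i j])
  qed
  also have "\<dots> = ennreal (\<Sum>i\<in>{1..N}. P i j * m i (f i -` A \<inter> {0..1}))"
    by (rule sum_ennreal) (auto intro!: mult_nonneg_nonneg P_nonneg j)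
  finally show ?thesis
    by (subst (asm) ennreal_inj) (auto intro!: sum_nonneg mult_nonneg_nonneg P_nonneg j)
qed

lemma measure_mono_borel:
  "k \<in> {1..N} \<Longrightarrow> A \<subseteq> B \<Longrightarrow> B \<in> sets borel \<Longrightarrow> m k A \<le> m k B"
  by (rule finite_measure.finite_measure_mono[OF finite_mu]) (simp_all add: sets_mu)

lemma measure_union_borel:
  "k \<in> {1..N} \<Longrightarrow> A \<in> sets borel \<Longrightarrow> B \<in> sets borel \<Longrightarrow> A \<inter> B = {} \<Longrightarrow>
    m k (A \<union> B) = m k A + m k B"
  by (rule finite_measure.finite_measure_Union[OF finite_mu]) (simp_all add: sets_mu)

lemma measure_restrict_unit:
  assumes k: "k \<in> {1..N}" and A: "A \<in> sets borel"
  shows "m k (A \<inter> {0..1}) = m k A"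
proof -
  have "m k ((A \<inter> {0..1}) \<union> (A - {0..1})) = m k (A \<inter> {0..1}) + m k (A - {0..1})"
    by (rule measure_union_borel[OF k]) (use A in auto)
  then have "m k A = m k (A \<inter> {0..1}) + m k (A - {0..1})" by (simp add: Int_Diff_Un)
  moreover have "m k (A - {0..1}) \<le> m k (- {0..1})"
    by (rule measure_mono_borel[OF k]) (auto intro: borel_open)
  moreover have "m k (- {0..1}) = 0" using outside_null[OF k] by (simp add: emeasure_real[OF k])
  ultimately show ?thesis by (simp add: measure_nonneg order_antisym)
qed

lemma measure_split:
  assumes k: "k \<in> {1..N}" and A: "A \<in> sets borel" and W: "W \<in> sets borel"
  shows "m k A = m k (A \<inter> W) + m k (A \<inter> - W)"
proof -
  have "m k ((A \<inter> W) \<union> (A \<inter> - W)) = m k (A \<inter> W) + m k (A \<inter> - W)"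
    by (rule measure_union_borel[OF k]) (use A W in auto)
  moreover have "(A \<inter> W) \<union> (A \<inter> - W) = A" by blast
  ultimately show ?thesis by simp
qed

lemma measure_eq_null_diff:
  assumes k: "k \<in> {1..N}" and B: "S1 \<in> sets borel" "S2 \<in> sets borel" "Z1 \<in> sets borel" "Z2 \<in> sets borel"
    and sub: "S1 - S2 \<subseteq> Z1" "S2 - S1 \<subseteq> Z2" and null: "m k Z1 = 0" "m k Z2 = 0"
  shows "m k S1 = m k S2"
proof -
  have "m k (S1 - S2) = 0" "m k (S2 - S1) = 0"
    using measure_mono_borel[OF k sub(1) B(3)] measure_mono_borel[OF k sub(2) B(4)] null
    by (simp_all add: measure_nonneg order_antisym)
  moreover have "m k ((S1 \<inter> S2) \<union> (S1 - S2)) = m k (S1 \<inter> S2) + m k (S1 - S2)"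
    by (rule measure_union_borel[OF k]) (use B in auto)
  moreover have "m k ((S2 \<inter> S1) \<union> (S2 - S1)) = m k (S2 \<inter> S1) + m k (S2 - S1)"
    by (rule measure_union_borel[OF k]) (use B in auto)
  moreover have "(S1 \<inter> S2) \<union> (S1 - S2) = S1" "(S2 \<inter> S1) \<union> (S2 - S1) = S2" by blast+
  ultimately show ?thesis by (simp add: Int_commute)
qed

lemma supp_unit: "k \<in> {1..N} \<Longrightarrow> S k \<subseteq> {0..1}"
proof
  fix x assume k: "k \<in> {1..N}" and x: "x \<in> S k"
  show "x \<in> {0..1}"
  proof (rule ccontr)
    assume "x \<notin> {0..1}"
    moreover have "open (- {0..1::real})" by (simp add: open_Compl)
    ultimately obtain e where e: "e > 0" "ball x e \<subseteq> - {0..1}"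
      unfolding open_contains_ball by blast
    then have "emeasure (\<mu> k) (ball x e) \<le> emeasure (\<mu> k) (- {0..1})"
      by (intro emeasure_mono) (auto simp: sets_mu[OF k] intro: borel_open)
    then show False using x e(1) outside_null[OF k] unfolding msupp_def by auto
  qed
qed

lemma supp_iff: "k \<in> {1..N} \<Longrightarrow> x \<in> S k \<longleftrightarrow> (\<forall>e>0. m k (ball x e) > 0)"
  unfolding msupp_def by (simp add: emeasure_real zero_less_measure_iff)

lemma supp_closed:
  assumes k: "k \<in> {1..N}"
  shows "closed (S k)"
  unfolding closed_def open_contains_ball
proof (intro ballI)
  fix y assume "y \<in> - S k"
  then obtain e where e: "e > 0" "emeasure (\<mu> k) (ball y e) = 0" unfolding msupp_def by auto
  have "z \<notin> S k" if z: "z \<in> ball y e" for z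
  proof -
    have sub: "ball z (e - dist y z) \<subseteq> ball y e"
      by (simp add: ball_subset_ball_iff dist_commute)
    have "emeasure (\<mu> k) (ball z (e - dist y z)) = 0"
      using emeasure_mono[OF sub, of "\<mu> k"] e(2) by (simp add: sets_mu[OF k])
    moreover have "e - dist y z > 0" using z by simp
    ultimately have "\<exists>e'>0. emeasure (\<mu> k) (ball z e') = 0" by blast
    then show ?thesis by (simp add: msupp_def)
  qed
  then show "\<exists>e>0. ball y e \<subseteq> - S k" using e(1) by blast
qed

lemma supp_interior_pos:
  assumes k: "k \<in> {1..N}" and x: "x \<in> S k" and e: "e > 0" "ball x e \<subseteq> V" and V: "V \<in> sets borel"
  shows "m k V > 0"
  using supp_iff[OF k] x e measure_mono_borel[OF k e(2) V] by fastforce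

lemma supp_subset_closed:
  assumes k: "k \<in> {1..N}" and V: "closed V" and null: "m k (- V) = 0"
  shows "S k \<subseteq> V"
proof
  fix x assume x: "x \<in> S k"
  show "x \<in> V"
  proof (rule ccontr)
    assume "x \<notin> V"
    then obtain e where "e > 0" "ball x e \<subseteq> - V"
      using V unfolding closed_def open_contains_ball by blast
    then have "m k (- V) > 0" using supp_interior_pos[OF k x] V by (auto intro: borel_open)
    then show False using null by simp
  qed
qed

lemma supp_step:
  assumes a: "a \<in> {1..N}" and b: "b \<in> {1..N}" and Pab: "P a b > 0" and x: "x \<in> S a"
  shows "f a x \<in> S b"
  unfolding supp_iff[OF b]
proof (intro allI impI)
  fix e :: real assume e: "e > 0"
  have xI: "x \<in> {0..1}" using supp_unit[OF a] x by auto
  obtain d where d: "d > 0" "\<And>y. y \<in> {0..1} \<Longrightarrow> dist y x < d \<Longrightarrow> dist (f a y) (f a x) < e"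
    using f_cont[OF a] xI e unfolding continuous_on_iff by metis
  have sub: "ball x d \<inter> {0..1} \<subseteq> f a -` ball (f a x) e \<inter> {0..1}"
    using d by (auto simp: dist_commute)
  have "0 < m a (ball x d)" using supp_iff[OF a] x d(1) by blast
  also have "\<dots> = m a (ball x d \<inter> {0..1})" using measure_restrict_unit[OF a] by simp
  also have "\<dots> \<le> m a (f a -` ball (f a x) e \<inter> {0..1})"
    by (rule measure_mono_borel[OF a sub preimage_borel[OF a]]) simp
  finally have "0 < P a b * m a (f a -` ball (f a x) e \<inter> {0..1})" using Pab by simp
  also have "\<dots> \<le> (\<Sum>i\<in>{1..N}. P i b * m i (f i -` ball (f a x) e \<inter> {0..1}))"
    by (rule member_le_sum[OF a]) (auto intro!: mult_nonneg_nonneg P_nonneg b)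
  also have "\<dots> = m b (ball (f a x) e)" using stationary_real[OF b] by simp
  finally show "0 < m b (ball (f a x) e)" .
qed

text \<open>By irreducibility every component carries positive mass.\<close>
lemma mass_pos:
  assumes j: "j \<in> {1..N}"
  shows "m j UNIV > 0"
proof -
  have mass_step: "m b UNIV > 0" if "m a UNIV > 0" "a \<in> {1..N}" "b \<in> {1..N}" "P a b > 0" for a b
  proof -
    have "0 < P a b * m a (f a -` UNIV \<inter> {0..1})"
      using that measure_restrict_unit[of a UNIV] by simp
    also have "\<dots> \<le> (\<Sum>i\<in>{1..N}. P i b * m i (f i -` UNIV \<inter> {0..1}))"
      by (rule member_le_sum[OF that(2)]) (auto intro!: mult_nonneg_nonneg P_nonneg that(3))
    also have "\<dots> = m b UNIV" using stationary_real[OF that(3)] by simp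
    finally show ?thesis .
  qed
  obtain l where l: "l \<in> {1..N}" "m l UNIV > 0"
  proof (rule ccontr)
    assume "\<not> thesis"
    then have "(\<Sum>l\<in>{1..N}. m l UNIV) \<le> 0" using that by (intro sum_nonpos) (meson not_le)
    then show False using measure_total by simp
  qed
  obtain G where "adm_comp N P f l j G" using connected[OF l(1) j] by blast
  then show ?thesis
  proof (induction rule: adm_comp_induct)
    case (single j)
    then show ?case using mass_step[OF l(2)] by blast
  next
    case (snoc l' j G)
    then show ?case using mass_step[of l' j] by blast
  qed
qed

text \<open>Hence every support is nonempty (by compactness of \<open>[0,1]\<close>) and contains its infimum
  \<open>A\<^sub>k\<close> and supremum \<open>B\<^sub>k\<close>.\<close>
lemma supp_nonempty:
  assumes k: "k \<in> {1..N}"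
  shows "S k \<noteq> {}"
proof
  assume empty: "S k = {}"
  define T where "T = {ball x e | x e. e > 0 \<and> emeasure (\<mu> k) (ball x e) = 0}"
  have "{0..1::real} \<subseteq> \<Union>T"
  proof
    fix x :: real
    obtain e where "e > 0" "emeasure (\<mu> k) (ball x e) = 0" using empty unfolding msupp_def by auto
    then show "x \<in> \<Union>T" unfolding T_def using centre_in_ball by blast
  qed
  moreover have "open B" if "B \<in> T" for B using that by (auto simp: T_def)
  ultimately obtain T' where T': "T' \<subseteq> T" "finite T'" "{0..1} \<subseteq> \<Union>T'"
    using compactE[OF compact_Icc] by metis
  have sets: "B \<in> sets (\<mu> k)" if "B \<in> T'" for B
    using that T'(1) by (auto simp: T_def sets_mu[OF k])
  have "emeasure (\<mu> k) {0..1} \<le> emeasure (\<mu> k) (\<Union>T')"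
    using T'(2,3) sets by (intro emeasure_mono) auto
  also have "\<dots> \<le> (\<Sum>B\<in>T'. emeasure (\<mu> k) B)"
    using emeasure_subadditive_finite[OF T'(2), of id "\<mu> k"] sets by auto
  also have "\<dots> = 0" using T'(1) by (intro sum.neutral) (auto simp: T_def)
  finally have "m k {0..1} = 0" by (simp add: emeasure_real[OF k])
  then show False using mass_pos[OF k] measure_restrict_unit[OF k, of UNIV] by simp
qed

lemma supp_bounds:
  assumes k: "k \<in> {1..N}"
  shows "A_mu \<mu> k \<in> S k" "B_mu \<mu> k \<in> S k" "x \<in> S k \<Longrightarrow> A_mu \<mu> k \<le> x" "x \<in> S k \<Longrightarrow> x \<le> B_mu \<mu> k"
proof -
  have "bdd_below (S k)" "bdd_above (S k)"
    using supp_unit[OF k] unfolding bdd_below_def bdd_above_def by fastforce+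
  note facts = this supp_nonempty[OF k] supp_closed[OF k]
  show "A_mu \<mu> k \<in> S k" unfolding A_mu_def by (rule closed_contains_Inf) (use facts in auto)
  show "B_mu \<mu> k \<in> S k" unfolding B_mu_def by (rule closed_contains_Sup) (use facts in auto)
  show "A_mu \<mu> k \<le> x" if "x \<in> S k" unfolding A_mu_def by (rule cInf_lower[OF that facts(1)])
  show "x \<le> B_mu \<mu> k" if "x \<in> S k" unfolding B_mu_def by (rule cSup_upper[OF that facts(2)])
qed


section \<open>Ergodicity excludes nontrivial invariant families\<close>

lemma density_emeasure:
  assumes k: "k \<in> {1..N}" and W: "W \<in> sets borel" and A: "A \<in> sets borel" and c: "c \<ge> 0"
  shows "emeasure (density (\<mu> k) (\<lambda>x. ennreal c * indicator W x)) A = ennreal (c * m k (A \<inter> W))"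
proof -
  have W': "W \<in> sets (\<mu> k)" and A': "A \<in> sets (\<mu> k)" using W A sets_mu[OF k] by simp_all
  have "emeasure (density (\<mu> k) (\<lambda>x. ennreal c * indicator W x)) A
      = (\<integral>\<^sup>+ x. ennreal c * indicator W x * indicator A x \<partial>\<mu> k)"
    by (rule emeasure_density[OF _ A'])
      (intro borel_measurable_times_ennreal borel_measurable_const borel_measurable_indicator W')
  also have "\<dots> = (\<integral>\<^sup>+ x. ennreal c * indicator (A \<inter> W) x \<partial>\<mu> k)"
    by (rule nn_integral_cong) (simp split: split_indicator)
  also have "\<dots> = ennreal c * emeasure (\<mu> k) (A \<inter> W)"
    using A' W' by (intro nn_integral_cmult_indicator) auto
  also have "\<dots> = ennreal (c * m k (A \<inter> W))"
    by (simp add: emeasure_real[OF k] ennreal_mult c)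
  finally show ?thesis .
qed

lemma density_stationary:
  assumes W: "\<And>j. j \<in> {1..N} \<Longrightarrow> W j \<in> sets borel" and c: "c \<ge> 0"
    and restr: "\<And>j A. j \<in> {1..N} \<Longrightarrow> A \<in> sets borel \<Longrightarrow>
      m j (A \<inter> W j) = (\<Sum>i\<in>{1..N}. P i j * m i (f i -` A \<inter> {0..1} \<inter> W i))"
    and total: "c * (\<Sum>k\<in>{1..N}. m k (W k)) = 1"
  shows "stationary N P f (\<lambda>k. density (\<mu> k) (\<lambda>x. ennreal c * indicator (W k) x))"
proof -
  define \<nu> where "\<nu> = (\<lambda>k. density (\<mu> k) (\<lambda>x. ennreal c * indicator (W k) x))"
  have e: "\<And>k A. k \<in> {1..N} \<Longrightarrow> A \<in> sets borel \<Longrightarrow> emeasure (\<nu> k) A = ennreal (c * m k (A \<inter> W k))"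
    unfolding \<nu>_def by (rule density_emeasure[OF _ W _ c])
  have "prob_family N \<nu>" unfolding prob_family_def
  proof (intro conjI ballI)
    fix k assume k: "k \<in> {1..N}"
    show "sets (\<nu> k) = sets borel" unfolding \<nu>_def by (simp add: sets_mu[OF k])
    have "m k (- {0..1} \<inter> W k) \<le> m k (- {0..1})"
      by (rule measure_mono_borel[OF k]) (auto intro: borel_open)
    moreover have "m k (- {0..1}) = 0" using outside_null[OF k] by (simp add: emeasure_real[OF k])
    ultimately have "m k (- {0..1} \<inter> W k) = 0" by (simp add: measure_nonneg order_antisym)
    then show "emeasure (\<nu> k) (- {0..1}) = 0" using e[OF k] by (simp add: borel_open)
  next
    have "(\<Sum>k\<in>{1..N}. emeasure (\<nu> k) UNIV) = ennreal (\<Sum>k\<in>{1..N}. c * m k (W k))"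
      using c by (simp add: e sum_ennreal)
    then show "(\<Sum>k\<in>{1..N}. emeasure (\<nu> k) UNIV) = 1" using total by (simp add: sum_distrib_left)
  qed
  moreover have "emeasure (\<nu> j) A = (\<Sum>i\<in>{1..N}. ennreal (P i j) * emeasure (\<nu> i) (f i -` A \<inter> {0..1}))"
    if j: "j \<in> {1..N}" and A: "A \<in> sets borel" for j A
  proof -
    have "(\<Sum>i\<in>{1..N}. ennreal (P i j) * emeasure (\<nu> i) (f i -` A \<inter> {0..1}))
        = (\<Sum>i\<in>{1..N}. ennreal (P i j * (c * m i (f i -` A \<inter> {0..1} \<inter> W i))))"
      using c by (intro sum.cong refl) (simp add: e preimage_borel[OF _ A] ennreal_mult P_nonneg[OF _ j])
    also have "\<dots> = ennreal (\<Sum>i\<in>{1..N}. P i j * (c * m i (f i -` A \<inter> {0..1} \<inter> W i)))"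
      using c by (intro sum_ennreal) (auto intro!: mult_nonneg_nonneg P_nonneg j)
    also have "(\<Sum>i\<in>{1..N}. P i j * (c * m i (f i -` A \<inter> {0..1} \<inter> W i))) = c * m j (A \<inter> W j)"
      by (simp add: restr[OF j A] sum_distrib_left mult.left_commute)
    finally show ?thesis using e[OF j A] by simp
  qed
  ultimately show ?thesis unfolding stationary_def \<nu>_def by blast
qed

lemma ergodic_no_split:
  assumes W: "\<And>j. j \<in> {1..N} \<Longrightarrow> W j \<in> sets borel"
    and restr: "\<And>j A. j \<in> {1..N} \<Longrightarrow> A \<in> sets borel \<Longrightarrow>
      m j (A \<inter> W j) = (\<Sum>i\<in>{1..N}. P i j * m i (f i -` A \<inter> {0..1} \<inter> W i))"
    and restr_compl: "\<And>j A. j \<in> {1..N} \<Longrightarrow> A \<in> sets borel \<Longrightarrow>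
      m j (A \<inter> - W j) = (\<Sum>i\<in>{1..N}. P i j * m i (f i -` A \<inter> {0..1} \<inter> - W i))"
  shows "(\<Sum>k\<in>{1..N}. m k (W k)) = 0 \<or> (\<Sum>k\<in>{1..N}. m k (- W k)) = 0"
proof (rule ccontr)
  define T where "T = (\<Sum>k\<in>{1..N}. m k (W k))"
  assume neither: "\<not> ?thesis"
  have Wc: "\<And>j. j \<in> {1..N} \<Longrightarrow> - W j \<in> sets borel" using W by simp
  have split: "m k A = m k (A \<inter> W k) + m k (A \<inter> - W k)" if k: "k \<in> {1..N}" and A: "A \<in> sets borel" for k A
    using measure_split[OF k A W[OF k]] .
  have "T + (\<Sum>k\<in>{1..N}. m k (- W k)) = 1"
    using measure_total split[of _ UNIV] unfolding T_def by (simp add: sum.distrib[symmetric])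
  moreover have "T \<ge> 0" "(\<Sum>k\<in>{1..N}. m k (- W k)) \<ge> 0" unfolding T_def by (simp_all add: sum_nonneg)
  ultimately have T: "0 < T" "T < 1" "(\<Sum>k\<in>{1..N}. m k (- W k)) = 1 - T"
    using neither unfolding T_def by auto
  define \<nu>1 where "\<nu>1 = (\<lambda>k. density (\<mu> k) (\<lambda>x. ennreal (1 / T) * indicator (W k) x))"
  define \<nu>2 where "\<nu>2 = (\<lambda>k. density (\<mu> k) (\<lambda>x. ennreal (1 / (1 - T)) * indicator (- W k) x))"
  have st1: "stationary N P f \<nu>1" unfolding \<nu>1_def
    by (rule density_stationary[OF W _ restr]) (use T in \<open>simp_all add: T_def\<close>)
  have st2: "stationary N P f \<nu>2" unfolding \<nu>2_def
    by (rule density_stationary[OF Wc _ restr_compl]) (use T in simp_all)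
  have mix: "emeasure (\<mu> k) A = ennreal T * emeasure (\<nu>1 k) A + ennreal (1 - T) * emeasure (\<nu>2 k) A"
    if k: "k \<in> {1..N}" and A: "A \<in> sets borel" for k A
    using T split[OF k A]
    by (simp add: \<nu>1_def \<nu>2_def density_emeasure[OF k W[OF k] A] density_emeasure[OF k Wc[OF k] A]
        emeasure_real[OF k] ennreal_mult[symmetric] ennreal_plus[symmetric] del: ennreal_plus)
  have same: "\<forall>k\<in>{1..N}. \<forall>A\<in>sets borel. emeasure (\<nu>1 k) A = emeasure (\<mu> k) A"
    using erg st1 st2 T mix unfolding ergodic_def by blast
  have "(\<Sum>k\<in>{1..N}. m k (- W k)) \<noteq> 0" using neither by simp
  then obtain j where j: "j \<in> {1..N}" "m j (- W j) \<noteq> 0"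
    by (rule sum.not_neutral_contains_not_neutral)
  have "emeasure (\<nu>1 j) (- W j) = 0"
    using density_emeasure[OF j(1) W[OF j(1)] Wc[OF j(1)], of "1 / T"] T(1) unfolding \<nu>1_def by simp
  then show False using same j Wc[OF j(1)] by (simp add: emeasure_real[OF j(1)])
qed


definition forward_invariant :: "(nat \<Rightarrow> real set) \<Rightarrow> bool" where
  "forward_invariant V \<longleftrightarrow> (\<forall>j\<in>{1..N}. V j \<in> sets borel) \<and>
     (\<forall>i\<in>{1..N}. \<forall>j\<in>{1..N}. P i j > 0 \<longrightarrow> f i ` (V i \<inter> {0..1}) \<subseteq> V j)"

lemma stochastic_outflow: "(\<Sum>j\<in>{1..N}. \<Sum>i\<in>{1..N}. P i j * h i) = (\<Sum>i\<in>{1..N}. h i)"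
proof -
  have "(\<Sum>j\<in>{1..N}. \<Sum>i\<in>{1..N}. P i j * h i) = (\<Sum>i\<in>{1..N}. (\<Sum>j\<in>{1..N}. P i j) * h i)"
    by (subst sum.swap) (simp add: sum_distrib_right)
  also have "\<dots> = (\<Sum>i\<in>{1..N}. h i)"
  proof (intro sum.cong refl)
    fix i assume "i \<in> {1..N}"
    show "(\<Sum>j\<in>{1..N}. P i j) * h i = h i" by (simp only: P_row_sum[OF \<open>i \<in> {1..N}\<close>] mult_1)
  qed
  finally show ?thesis .
qed

lemma invariant_preimage_split:
  assumes V: "forward_invariant V" and i: "i \<in> {1..N}" and j: "j \<in> {1..N}" and Pij: "P i j > 0"
  shows "m i (f i -` V j \<inter> {0..1}) = m i (V i) + m i ((f i -` V j \<inter> {0..1}) - V i)"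
proof -
  have Vb: "V i \<in> sets borel" "V j \<in> sets borel" using V i j unfolding forward_invariant_def by blast+
  have "V i \<inter> {0..1} \<subseteq> f i -` V j \<inter> {0..1}" using V i j Pij unfolding forward_invariant_def by blast
  then have "(V i \<inter> {0..1}) \<union> ((f i -` V j \<inter> {0..1}) - V i) = f i -` V j \<inter> {0..1}" by blast
  moreover have "m i ((V i \<inter> {0..1}) \<union> ((f i -` V j \<inter> {0..1}) - V i))
      = m i (V i \<inter> {0..1}) + m i ((f i -` V j \<inter> {0..1}) - V i)"
    by (rule measure_union_borel[OF i]) (use Vb preimage_borel[OF i Vb(2)] in auto)
  ultimately show ?thesis using measure_restrict_unit[OF i Vb(1)] by simp
qed

text \<open>Mass balance: for a forward invariant family, the points of \<open>I\<^sub>i\<close> outside \<open>V\<^sub>i\<close> that an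
  admissible map sends into \<open>V\<^sub>j\<close> form a null set, since otherwise the stationarity equations
  would create mass in \<open>V\<close>.\<close>
lemma invariant_leak_null:
  assumes V: "forward_invariant V" and i: "i \<in> {1..N}" and j: "j \<in> {1..N}" and Pij: "P i j > 0"
  shows "m i ((f i -` V j \<inter> {0..1}) - V i) = 0"
proof -
  define X where "X i j = m i ((f i -` V j \<inter> {0..1}) - V i)" for i j
  have Vb: "\<And>j. j \<in> {1..N} \<Longrightarrow> V j \<in> sets borel" using V unfolding forward_invariant_def by blast
  have decomp: "P i j * m i (f i -` V j \<inter> {0..1}) = P i j * m i (V i) + P i j * X i j"
    if i: "i \<in> {1..N}" and j: "j \<in> {1..N}" for i j
  proof (cases "P i j > 0")
    case True
    then show ?thesis using invariant_preimage_split[OF V i j] unfolding X_def by (simp add: distrib_left)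
  next
    case False
    then show ?thesis using P_nonneg[OF i j] by simp
  qed
  have "(\<Sum>j\<in>{1..N}. m j (V j)) = (\<Sum>j\<in>{1..N}. \<Sum>i\<in>{1..N}. P i j * m i (f i -` V j \<inter> {0..1}))"
    by (intro sum.cong refl) (rule stationary_real[OF _ Vb])
  also have "\<dots> = (\<Sum>j\<in>{1..N}. \<Sum>i\<in>{1..N}. P i j * m i (V i)) + (\<Sum>j\<in>{1..N}. \<Sum>i\<in>{1..N}. P i j * X i j)"
    by (simp add: decomp sum.distrib)
  also have "\<dots> = (\<Sum>i\<in>{1..N}. m i (V i)) + (\<Sum>j\<in>{1..N}. \<Sum>i\<in>{1..N}. P i j * X i j)"
    by (simp only: stochastic_outflow)
  finally have total: "(\<Sum>j\<in>{1..N}. \<Sum>i\<in>{1..N}. P i j * X i j) = 0" by simp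
  have nonneg: "0 \<le> P i j * X i j" if "i \<in> {1..N}" "j \<in> {1..N}" for i j
    using P_nonneg that by (simp add: X_def)
  have column_nonneg: "0 \<le> (\<Sum>i\<in>{1..N}. P i j' * X i j')" if "j' \<in> {1..N}" for j'
    by (rule sum_nonneg) (rule nonneg[OF _ that])
  have "(\<Sum>i\<in>{1..N}. P i j * X i j) = 0"
    using sum_nonneg_eq_0_iff[of "{1..N}" "\<lambda>j'. \<Sum>i\<in>{1..N}. P i j' * X i j'",
        OF finite_atLeastAtMost column_nonneg] total j by blast
  then have "P i j * X i j = 0"
    using sum_nonneg_eq_0_iff[of "{1..N}" "\<lambda>i. P i j * X i j", OF finite_atLeastAtMost nonneg[OF _ j]] i by blast
  then show ?thesis using Pij unfolding X_def by simp
qed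

lemma restricted_stationary:
  assumes W: "\<And>j. j \<in> {1..N} \<Longrightarrow> W j \<in> sets borel"
    and null_in: "\<And>i j. i \<in> {1..N} \<Longrightarrow> j \<in> {1..N} \<Longrightarrow> P i j > 0 \<Longrightarrow> m i ((f i -` W j \<inter> {0..1}) - W i) = 0"
    and null_out: "\<And>i j. i \<in> {1..N} \<Longrightarrow> j \<in> {1..N} \<Longrightarrow> P i j > 0 \<Longrightarrow> m i ((W i \<inter> {0..1}) - f i -` W j) = 0"
    and j: "j \<in> {1..N}" and A: "A \<in> sets borel"
  shows "m j (A \<inter> W j) = (\<Sum>i\<in>{1..N}. P i j * m i (f i -` A \<inter> {0..1} \<inter> W i))"
proof -
  have "m j (A \<inter> W j) = (\<Sum>i\<in>{1..N}. P i j * m i (f i -` (A \<inter> W j) \<inter> {0..1}))"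
    using stationary_real[OF j] A W[OF j] by simp
  also have "\<dots> = (\<Sum>i\<in>{1..N}. P i j * m i (f i -` A \<inter> {0..1} \<inter> W i))"
  proof (intro sum.cong refl)
    fix i assume i: "i \<in> {1..N}"
    show "P i j * m i (f i -` (A \<inter> W j) \<inter> {0..1}) = P i j * m i (f i -` A \<inter> {0..1} \<inter> W i)"
    proof (cases "P i j > 0")
      case True
      have b1: "f i -` (A \<inter> W j) \<inter> {0..1} \<in> sets borel"
        using A W[OF j] by (intro preimage_borel[OF i]) simp
      have b2: "f i -` A \<inter> {0..1} \<inter> W i \<in> sets borel" using preimage_borel[OF i A] W[OF i] by blast
      have z1: "(f i -` W j \<inter> {0..1}) - W i \<in> sets borel"
        using preimage_borel[OF i W[OF j]] W[OF i] by blast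
      have "(W i \<inter> {0..1}) - f i -` W j = (W i \<inter> {0..1}) - (f i -` W j \<inter> {0..1})" by blast
      then have z2: "(W i \<inter> {0..1}) - f i -` W j \<in> sets borel"
        using preimage_borel[OF i W[OF j]] W[OF i] by auto
      have "m i (f i -` (A \<inter> W j) \<inter> {0..1}) = m i (f i -` A \<inter> {0..1} \<inter> W i)"
        by (rule measure_eq_null_diff[OF i b1 b2 z1 z2 _ _ null_in[OF i j True] null_out[OF i j True]]) blast+
      then show ?thesis by simp
    next
      case False
      then show ?thesis using P_nonneg[OF i j] by simp
    qed
  qed
  finally show ?thesis .
qed

lemma invariant_full_measure:
  assumes V: "forward_invariant V" and k0: "k0 \<in> {1..N}" "m k0 (V k0) > 0" and j: "j \<in> {1..N}"
  shows "m j (- V j) = 0"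
proof -
  have Vb: "\<And>j. j \<in> {1..N} \<Longrightarrow> V j \<in> sets borel" using V unfolding forward_invariant_def by blast
  have into: "(V i \<inter> {0..1}) - f i -` V j = {}" if "i \<in> {1..N}" "j \<in> {1..N}" "P i j > 0" for i j
    using V that unfolding forward_invariant_def by blast
  have into_null: "m i ((V i \<inter> {0..1}) - f i -` V j) = 0"
    if "i \<in> {1..N}" "j \<in> {1..N}" "P i j > 0" for i j
    by (simp only: into[OF that] measure_empty)
  note leak = invariant_leak_null[OF V]
  have "(\<Sum>k\<in>{1..N}. m k (V k)) = 0 \<or> (\<Sum>k\<in>{1..N}. m k (- V k)) = 0"
  proof (rule ergodic_no_split[OF Vb])
    show "m j (A \<inter> V j) = (\<Sum>i\<in>{1..N}. P i j * m i (f i -` A \<inter> {0..1} \<inter> V i))"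
      if "j \<in> {1..N}" "A \<in> sets borel" for j A
      by (rule restricted_stationary[OF Vb leak into_null that])
    have compl_in: "m i ((f i -` (- V j) \<inter> {0..1}) - (- V i)) = 0"
      if "i \<in> {1..N}" "j \<in> {1..N}" "P i j > 0" for i j
    proof -
      have "(f i -` (- V j) \<inter> {0..1}) - (- V i) = (V i \<inter> {0..1}) - f i -` V j" by blast
      then show ?thesis using into[OF that] by simp
    qed
    have compl_out: "m i ((- V i \<inter> {0..1}) - f i -` (- V j)) = 0"
      if "i \<in> {1..N}" "j \<in> {1..N}" "P i j > 0" for i j
    proof -
      have "(- V i \<inter> {0..1}) - f i -` (- V j) = (f i -` V j \<inter> {0..1}) - V i" by blast
      then show ?thesis using leak[OF that] by simp
    qed
    show "m j (A \<inter> - V j) = (\<Sum>i\<in>{1..N}. P i j * m i (f i -` A \<inter> {0..1} \<inter> - V i))"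
      if "j \<in> {1..N}" "A \<in> sets borel" for j A
      by (rule restricted_stationary[OF _ compl_in compl_out that]) (use Vb in simp)
  qed
  moreover have "0 < (\<Sum>k\<in>{1..N}. m k (V k))"
    using k0 member_le_sum[of k0 "{1..N}" "\<lambda>k. m k (V k)"] by fastforce
  ultimately have "(\<Sum>k\<in>{1..N}. m k (- V k)) = 0" by simp
  then show ?thesis using j by (simp add: sum_nonneg_eq_0_iff)
qed


section \<open>Threshold properties and the main theorem\<close>

sublocale supp: ordered_system N P f S "A_mu \<mu>" "B_mu \<mu>"
proof
  fix i assume i: "i \<in> {1..N}"
  show "continuous_on {0..1} (f i)" "mono_on {0..1} (f i)" "f i ` {0..1} \<subseteq> {0..1}"
    using f_cont[OF i] f_mono[OF i] f_unit[OF i] .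
  show "S i \<subseteq> {0..1}" by (rule supp_unit[OF i])
  show "A_mu \<mu> i \<in> S i" "B_mu \<mu> i \<in> S i" using supp_bounds[OF i] by blast+
  show "A_mu \<mu> i \<le> x" "x \<le> B_mu \<mu> i" if "x \<in> S i" for x using supp_bounds[OF i] that by blast+
next
  fix i j assume "i \<in> {1..N}" "j \<in> {1..N}"
  then show "\<exists>G. adm_comp N P f i j G" by (rule connected)
  show "f i ` S i \<subseteq> S j" if "P i j > 0"
    using supp_step[OF \<open>i \<in> {1..N}\<close> \<open>j \<in> {1..N}\<close> that] by blast
qed

text \<open>A threshold family pushed up along admissible steps bounds a forward invariant family of
  upper rays; if it lies below one top, the rays carry mass, so by ergodicity they contain all
  supports.\<close>
lemma lower_threshold:
  assumes c: "\<forall>j\<in>{1..N}. c j \<in> {0..1}" and sub: "\<forall>i\<in>{1..N}. \<forall>j\<in>{1..N}. P i j > 0 \<longrightarrow> c j \<le> f i (c i)"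
    and k0: "k0 \<in> {1..N}" "c k0 < B_mu \<mu> k0" and j: "j \<in> {1..N}"
  shows "c j \<le> A_mu \<mu> j"
proof -
  define V where "V j = {c j..}" for j
  have "forward_invariant V"
    unfolding forward_invariant_def
  proof (intro conjI ballI impI)
    fix i j assume i: "i \<in> {1..N}" and j: "j \<in> {1..N}" and Pij: "P i j > 0"
    show "f i ` (V i \<inter> {0..1}) \<subseteq> V j"
    proof (rule image_subsetI)
      fix x assume "x \<in> V i \<inter> {0..1}"
      then have "f i (c i) \<le> f i x" using mono_onD[OF f_mono[OF i]] c i by (auto simp: V_def)
      then show "f i x \<in> V j" using sub i j Pij by (force simp: V_def)
    qed
  qed (simp add: V_def)
  moreover have "m k0 (V k0) > 0"
    using k0 by (intro supp_interior_pos[OF k0(1) supp_bounds(2)[OF k0(1)], of "B_mu \<mu> k0 - c k0"])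
      (auto simp: V_def dist_real_def)
  ultimately have "m j (- V j) = 0" by (rule invariant_full_measure[OF _ k0(1) _ j])
  then have "S j \<subseteq> V j" by (intro supp_subset_closed[OF j]) (simp_all add: V_def)
  then show ?thesis using supp_bounds(1)[OF j] by (auto simp: V_def)
qed

lemma upper_threshold:
  assumes d: "\<forall>j\<in>{1..N}. d j \<in> {0..1}" and sup: "\<forall>i\<in>{1..N}. \<forall>j\<in>{1..N}. P i j > 0 \<longrightarrow> f i (d i) \<le> d j"
    and k0: "k0 \<in> {1..N}" "A_mu \<mu> k0 < d k0" and j: "j \<in> {1..N}"
  shows "B_mu \<mu> j \<le> d j"
proof -
  define V where "V j = {..d j}" for j
  have "forward_invariant V"
    unfolding forward_invariant_def
  proof (intro conjI ballI impI)
    fix i j assume i: "i \<in> {1..N}" and j: "j \<in> {1..N}" and Pij: "P i j > 0"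
    show "f i ` (V i \<inter> {0..1}) \<subseteq> V j"
    proof (rule image_subsetI)
      fix x assume "x \<in> V i \<inter> {0..1}"
      then have "f i x \<le> f i (d i)" using mono_onD[OF f_mono[OF i]] d i by (auto simp: V_def)
      then show "f i x \<in> V j" using sup i j Pij by (force simp: V_def)
    qed
  qed (simp add: V_def)
  moreover have "m k0 (V k0) > 0"
    using k0 by (intro supp_interior_pos[OF k0(1) supp_bounds(1)[OF k0(1)], of "d k0 - A_mu \<mu> k0"])
      (auto simp: V_def dist_real_def)
  ultimately have "m j (- V j) = 0" by (rule invariant_full_measure[OF _ k0(1) _ j])
  then have "S j \<subseteq> V j" by (intro supp_subset_closed[OF j]) (simp_all add: V_def)
  then show ?thesis using supp_bounds(2)[OF j] by (auto simp: V_def)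
qed

lemma threshold_properties: "supp.lower_threshold_property" "supp.upper_threshold_property"
  unfolding supp.lower_threshold_property_def supp.upper_threshold_property_def
  using lower_threshold upper_threshold by blast+

end

text \<open>Primitivity gives connectivity; the two endpoints are then reached by the
  order-theoretic argument and its reflection.\<close>
theorem mainTheorem6:
  fixes N :: nat and A P :: "nat \<Rightarrow> nat \<Rightarrow> real" and f :: "nat \<Rightarrow> real \<Rightarrow> real"
    and \<mu> :: "nat \<Rightarrow> real measure" and k k' :: nat and \<epsilon> :: real
  assumes "N \<ge> 1"
    and "zero_one_matrix N A" and "primitive_matrix N A"
    and "stochastic_matrix N P"
    and "\<forall>i\<in>{1..N}. \<forall>j\<in>{1..N}. P i j > 0 \<longleftrightarrow> A i j = 1"
    and "\<forall>i\<in>{1..N}. good_map (f i)"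
    and "G1 N P f" and "G2 N P f" and "G3 N P f"
    and "ergodic N P f \<mu>"
    and "k \<in> {1..N}" and "k' \<in> {1..N}"
    and "\<epsilon> > 0"
  shows "\<exists>GA GB. adm_comp N P f k k' GA \<and> adm_comp N P f k k' GB \<and>
           GA ` {A_mu \<mu> k..B_mu \<mu> k} \<subseteq> ball (A_mu \<mu> k') \<epsilon> \<and>
           GB ` {A_mu \<mu> k..B_mu \<mu> k} \<subseteq> ball (B_mu \<mu> k') \<epsilon>"
proof -
  obtain n where n: "n \<ge> 1" "\<forall>i\<in>{1..N}. \<forall>j\<in>{1..N}. matpow N A n i j > 0"
    using assms(3) unfolding primitive_matrix_def by blast
  then obtain n' where "n = Suc n'" by (cases n) auto
  then have connected: "\<exists>G. adm_comp N P f i j G" if "i \<in> {1..N}" "j \<in> {1..N}" for i j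
    using matpow_pos_adm_comp[OF assms(2,5) that] n(2) that by blast
  interpret stationary_system N P f \<mu>
    using assms(4,6,10) connected by unfold_locales
  show ?thesis
    using supp.lower_end_reachable[OF assms(9) threshold_properties(1) assms(11,12,13)]
      supp.upper_end_reachable[OF assms(9) threshold_properties(2) assms(11,12,13)]
    by blast
qed

end
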